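(* Let $a<b$ and let $H\subseteq\mathbb{R}^2$ be a functionally connected set such that $[a,b]\subseteq\mathrm{pr}_1[H]$. Let $h\colon[a,b]\to\mathbb{R}$ be a continuous function whose graph is included in $H$, and let $u,v\in\mathbb{R}$ be such that $(a,u),(b,v)\in H$. Then for every open interval $J$ such that $u,v\in J$ and $\mathrm{rng}(h)\subseteq J$, there exists a continuous function $g\colon[a,b]\to J$ whose graph is included in $H$, with $g(a)=u$ and $g(b)=v$.
   Context: $\mathrm{pr}_1[H]$ is the projection of $H$ to the first coordinate. A set $H\subseteq\mathbb{R}^2$ is functionally connected if for any two points $(x_1,y_1),(x_2,y_2)\in H$ with $x_1\neq x_2$ there exists a continuous function $h$ on the closed interval with endpoints $x_1,x_2$ such that $h(x_1)=y_1$, $h(x_2)=y_2$, and the graph of $h$ is included in $H$. *)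

theory Defs
  imports "HOL-Analysis.Analysis"
begin

definition functionally_connected :: "(real \<times> real) set \<Rightarrow> bool" where
  "functionally_connected H \<longleftrightarrow>
     (\<forall>x1 y1 x2 y2. (x1, y1) \<in> H \<and> (x2, y2) \<in> H \<and> x1 \<noteq> x2 \<longrightarrow>
        (\<exists>h. continuous_on {min x1 x2..max x1 x2} h \<and> h x1 = y1 \<and> h x2 = y2 \<and>
             (\<forall>x\<in>{min x1 x2..max x1 x2}. (x, h x) \<in> H)))"

end

theory Submission
  imports Defs
begin

(* By symmetry it suffices to join (a,u) to the graph of h, i.e. to find, on an
   interval [a,d], a continuous g with graph in H and values in J such that g a = u and
   g d = h d; the two joins on [a,m] and [m,b] for the midpoint m are then glued together.
   Reflecting y to -y, we may assume h a < u. Take a graph rho in H through (a,u); by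
   continuity and openness of J, on a short interval [a,s] it stays in J and above h.
   Functional connectedness gives a graph k in H from (a,u) to (s, h s). Follow rho up to the
   last point t where k meets rho, then k up to the first point t' >= t where k meets h, then h.
   On [t,t'] the graph of k lies between those of h and rho, so its values lie in the
   interval J. *)

lemma functionally_connectedD:
  assumes "functionally_connected H" "(x1, y1) \<in> H" "(x2, y2) \<in> H" "x1 < x2"
  shows "\<exists>f. continuous_on {x1..x2} f \<and> f x1 = y1 \<and> f x2 = y2 \<and> (\<forall>x\<in>{x1..x2}. (x, f x) \<in> H)"
proof -
  have "x1 \<noteq> x2" "min x1 x2 = x1" "max x1 x2 = x2" using assms(4) by auto
  then show ?thesis using assms(1-3) unfolding functionally_connected_def by metis
qed

lemma functionally_connected_reflect_y:
  assumes "functionally_connected H"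
  shows "functionally_connected {(x, y). (x, - y) \<in> H}"
  unfolding functionally_connected_def
proof (intro allI impI)
  fix x1 y1 x2 y2 :: real
  let ?I = "{min x1 x2..max x1 x2}"
  assume "(x1, y1) \<in> {(x, y). (x, - y) \<in> H} \<and> (x2, y2) \<in> {(x, y). (x, - y) \<in> H} \<and> x1 \<noteq> x2"
  then obtain f where f: "continuous_on ?I f" "f x1 = - y1" "f x2 = - y2" "\<forall>x\<in>?I. (x, f x) \<in> H"
    using assms unfolding functionally_connected_def by blast
  show "\<exists>g. continuous_on ?I g \<and> g x1 = y1 \<and> g x2 = y2 \<and>
      (\<forall>x\<in>?I. (x, g x) \<in> {(x, y). (x, - y) \<in> H})"
    by (rule exI[of _ "\<lambda>x. - f x"]) (use f in \<open>auto intro: continuous_intros\<close>)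
qed

lemma functionally_connected_reflect_x:
  assumes "functionally_connected H"
  shows "functionally_connected {(x, y). (- x, y) \<in> H}"
  unfolding functionally_connected_def
proof (intro allI impI)
  fix x1 y1 x2 y2 :: real
  let ?I = "{min x1 x2..max x1 x2}"
  assume "(x1, y1) \<in> {(x, y). (- x, y) \<in> H} \<and> (x2, y2) \<in> {(x, y). (- x, y) \<in> H} \<and> x1 \<noteq> x2"
  then have "(- x1, y1) \<in> H" "(- x2, y2) \<in> H" "- x1 \<noteq> - x2" by auto
  moreover have "{min (- x1) (- x2)..max (- x1) (- x2)} = uminus ` ?I"
    by (simp add: min_def max_def)
  ultimately obtain f where f: "continuous_on (uminus ` ?I) f" "f (- x1) = y1" "f (- x2) = y2"
      "\<forall>x\<in>uminus ` ?I. (x, f x) \<in> H"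
    using assms unfolding functionally_connected_def by metis
  have "continuous_on ?I (\<lambda>x. f (- x))"
    by (rule continuous_on_compose2[OF f(1)]) (auto intro: continuous_intros)
  then show "\<exists>g. continuous_on ?I g \<and> g x1 = y1 \<and> g x2 = y2 \<and>
      (\<forall>x\<in>?I. (x, g x) \<in> {(x, y). (- x, y) \<in> H})"
    using f(2-4) by (intro exI[of _ "\<lambda>x. f (- x)"]) auto
qed

lemma continuous_on_uminus_iff:
  fixes g :: "real \<Rightarrow> real"
  shows "continuous_on S (\<lambda>x. - g x) \<longleftrightarrow> continuous_on S g"
  using continuous_on_minus[of S "\<lambda>x. - g x"] by (auto intro: continuous_on_minus)

lemma continuous_on_reflect_iff:
  fixes g :: "real \<Rightarrow> real"
  shows "continuous_on (uminus ` S) (\<lambda>x. g (- x)) \<longleftrightarrow> continuous_on S g"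
proof
  show "continuous_on S g" if "continuous_on (uminus ` S) (\<lambda>x. g (- x))"
    using continuous_on_compose2[OF that continuous_on_minus[OF continuous_on_id], of S] by force
  show "continuous_on (uminus ` S) (\<lambda>x. g (- x))" if "continuous_on S g"
    by (rule continuous_on_compose2[OF that]) (auto intro: continuous_intros)
qed

lemma IVT_first_root:
  fixes f :: "real \<Rightarrow> real"
  assumes "a \<le> b" "continuous_on {a..b} f" "0 < f a" "f b \<le> 0"
  shows "\<exists>c\<in>{a..b}. f c = 0 \<and> (\<forall>x\<in>{a..<c}. 0 < f x)"
proof -
  define Z where "Z = {x \<in> {a..b}. f x = 0}"
  have "Z \<noteq> {}" using IVT2'[of f b 0 a] assms by (auto simp: Z_def)
  moreover have "bdd_below Z" by (auto simp: Z_def bdd_below_def)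
  moreover have "closed Z" unfolding Z_def
    using continuous_closed_preimage_constant[OF assms(2)] by auto
  ultimately have "Inf Z \<in> Z" by (rule closed_contains_Inf)
  moreover have "0 < f x" if x: "x \<in> {a..<Inf Z}" for x
  proof (rule ccontr)
    assume "\<not> 0 < f x"
    moreover have "continuous_on {a..x} f"
      using x \<open>Inf Z \<in> Z\<close> by (auto simp: Z_def intro: continuous_on_subset[OF assms(2)])
    ultimately obtain y where "a \<le> y" "y \<le> x" "f y = 0"
      using IVT2'[of f x 0 a] x assms(3) by auto
    then have "y \<in> Z" using x \<open>Inf Z \<in> Z\<close> by (auto simp: Z_def)
    then show False using cInf_lower[OF _ \<open>bdd_below Z\<close>] \<open>y \<le> x\<close> x by fastforce
  qed
  ultimately show ?thesis by (auto simp: Z_def)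
qed

lemma IVT_last_root:
  fixes f :: "real \<Rightarrow> real"
  assumes "a \<le> b" "continuous_on {a..b} f" "f a \<le> 0" "0 < f b"
  shows "\<exists>c\<in>{a..b}. f c = 0 \<and> (\<forall>x\<in>{c<..b}. 0 < f x)"
proof -
  have "continuous_on {-b..-a} (\<lambda>x. f (- x))"
    using assms(2) continuous_on_reflect_iff[of "{a..b}" f] by simp
  then obtain c where c: "c \<in> {-b..-a}" "f (- c) = 0" and pos: "\<forall>x\<in>{-b..<c}. 0 < f (- x)"
    using IVT_first_root[of "-b" "-a" "\<lambda>x. f (- x)"] assms by auto
  have "0 < f x" if "x \<in> {-c<..b}" for x
    using pos[rule_format, of "- x"] that by auto
  with c show ?thesis by (intro bexI[of _ "- c"]) auto
qed

lemma eventually_at_right_initial_segment: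
  fixes a d :: real
  assumes "eventually P (at_right a)" "P a" "a < d"
  obtains s where "a < s" "s < d" "\<forall>x\<in>{a..s}. P x"
proof -
  obtain e where "a < e" "\<forall>y>a. y < e \<longrightarrow> P y"
    using assms(1) by (auto simp: eventually_at_right_field)
  moreover define s where "s = min ((a + d) / 2) ((a + e) / 2)"
  moreover have "a < s" "s < d" "s < e"
    using \<open>a < e\<close> assms(3) by (auto simp: s_def min_less_iff_disj)
  ultimately show ?thesis
    using assms(2) by (intro that[of s]) (auto simp: le_less)
qed

definition continuous_graph_in ::
    "(real \<times> real) set \<Rightarrow> real set \<Rightarrow> real set \<Rightarrow> (real \<Rightarrow> real) \<Rightarrow> bool"
  where "continuous_graph_in H J S g \<longleftrightarrow>
    continuous_on S g \<and> g ` S \<subseteq> J \<and> (\<forall>x\<in>S. (x, g x) \<in> H)"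

lemma continuous_graph_in_subset:
  "continuous_graph_in H J S g \<Longrightarrow> T \<subseteq> S \<Longrightarrow> continuous_graph_in H J T g"
  unfolding continuous_graph_in_def by (blast intro: continuous_on_subset)

lemma continuous_graph_in_glue:
  assumes "continuous_graph_in H J {a..c} f" "continuous_graph_in H J {c..b} g"
    and "f c = g c" "a \<le> c" "c \<le> b"
  shows "continuous_graph_in H J {a..b} (\<lambda>x. if x \<le> c then f x else g x)"
proof -
  have "continuous_on {a..c} (\<lambda>x. if x \<le> c then f x else g x)"
    by (rule continuous_on_eq[of _ f]) (use assms(1) in \<open>auto simp: continuous_graph_in_def\<close>)
  moreover have "continuous_on {c..b} (\<lambda>x. if x \<le> c then f x else g x)"
    by (rule continuous_on_eq[of _ g]) (use assms(2,3) in \<open>auto simp: continuous_graph_in_def\<close>)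
  ultimately have "continuous_on ({a..c} \<union> {c..b}) (\<lambda>x. if x \<le> c then f x else g x)"
    by (rule continuous_on_closed_Un[rotated 2]) auto
  moreover have "{a..b} = {a..c} \<union> {c..b}" using assms(4,5) by auto
  ultimately show ?thesis using assms(1,2,4,5) by (auto simp: continuous_graph_in_def)
qed

lemma continuous_graph_in_reflect_y:
  "continuous_graph_in {(x, y). (x, - y) \<in> H} (uminus ` J) S (\<lambda>x. - g x) \<longleftrightarrow> continuous_graph_in H J S g"
  by (auto simp: continuous_graph_in_def continuous_on_uminus_iff image_subset_iff)

lemma continuous_graph_in_reflect_x:
  "continuous_graph_in {(x, y). (- x, y) \<in> H} J (uminus ` S) (\<lambda>x. g (- x)) \<longleftrightarrow> continuous_graph_in H J S g"
  by (auto simp: continuous_graph_in_def continuous_on_reflect_iff image_subset_iff)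

lemma continuous_graph_in_switch_down:
  assumes "a \<le> s" "is_interval J"
    and \<rho>: "continuous_graph_in H J {a..s} \<rho>" and h: "continuous_graph_in H J {a..s} h"
    and h_below_\<rho>: "\<forall>x\<in>{a..s}. h x < \<rho> x"
    and kc: "continuous_on {a..s} k" and kH: "\<forall>x\<in>{a..s}. (x, k x) \<in> H"
    and "k a = \<rho> a" "k s = h s"
  shows "\<exists>g. continuous_graph_in H J {a..s} g \<and> g a = \<rho> a \<and> g s = h s"
proof -
  have \<rho>c: "continuous_on {a..s} \<rho>" and hc: "continuous_on {a..s} h"
    using \<rho> h by (auto simp: continuous_graph_in_def)
  have "continuous_on {a..s} (\<lambda>x. \<rho> x - k x)" using \<rho>c kc by (intro continuous_intros)
  then obtain t where t: "t \<in> {a..s}" "k t = \<rho> t" and k_below_\<rho>: "\<forall>x\<in>{t<..s}. k x < \<rho> x"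
    using IVT_last_root[of a s "\<lambda>x. \<rho> x - k x"] assms by auto
  have "h s < \<rho> s" using h_below_\<rho> \<open>a \<le> s\<close> by auto
  with t \<open>k s = h s\<close> have "t < s" by (cases "t = s") auto
  have "continuous_on {t..s} (\<lambda>x. k x - h x)"
    using kc hc t(1) by (auto intro!: continuous_intros intro: continuous_on_subset)
  then obtain t' where t': "t' \<in> {t..s}" "k t' = h t'" and h_below_k: "\<forall>x\<in>{t..<t'}. h x < k x"
    using IVT_first_root[of t s "\<lambda>x. k x - h x"] h_below_\<rho> t \<open>k s = h s\<close> by auto
  have k: "continuous_graph_in H J {t..t'} k"
    unfolding continuous_graph_in_def
  proof (intro conjI ballI subsetI)
    show "continuous_on {t..t'} k" using kc t t' by (auto intro: continuous_on_subset)
    show "(x, k x) \<in> H" if "x \<in> {t..t'}" for x using kH t t' that by auto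
    fix y assume "y \<in> k ` {t..t'}"
    then obtain x where x: "x \<in> {t..t'}" and "y = k x" by auto
    have "h x \<le> k x" "k x \<le> \<rho> x"
      using x t t' h_below_k k_below_\<rho> by (auto simp: le_less)
    moreover have "h x \<in> J" "\<rho> x \<in> J" using x t t' h \<rho> by (auto simp: continuous_graph_in_def)
    ultimately show "y \<in> J" using \<open>is_interval J\<close> \<open>y = k x\<close> unfolding is_interval_1 by blast
  qed
  have "continuous_graph_in H J {a..t'} (\<lambda>x. if x \<le> t then \<rho> x else k x)"
    by (rule continuous_graph_in_glue[OF continuous_graph_in_subset[OF \<rho>] k]) (use t t' in auto)
  then have "continuous_graph_in H J {a..s} (\<lambda>x. if x \<le> t' then if x \<le> t then \<rho> x else k x else h x)"
    by (rule continuous_graph_in_glue[OF _ continuous_graph_in_subset[OF h]]) (use t t' in auto)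
  then show ?thesis
    using t t' \<open>t < s\<close> by (intro exI) auto
qed

lemma continuous_graph_in_join_from_above:
  assumes fc: "functionally_connected H" and "a < d"
    and h: "continuous_graph_in H J {a..d} h"
    and "(a, u) \<in> H" "u \<in> J" "open J" "is_interval J" "h a < u"
  shows "\<exists>g. continuous_graph_in H J {a..d} g \<and> g a = u \<and> g d = h d"
proof -
  have hc: "continuous_on {a..d} h" and hH: "\<forall>x\<in>{a..d}. (x, h x) \<in> H"
    using h by (auto simp: continuous_graph_in_def)
  obtain \<rho> where \<rho>c: "continuous_on {a..d} \<rho>" and "\<rho> a = u" and \<rho>H: "\<forall>x\<in>{a..d}. (x, \<rho> x) \<in> H"
    using functionally_connectedD[OF fc \<open>(a, u) \<in> H\<close>, of d "h d"] hH \<open>a < d\<close> by auto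
  have \<rho>_lim: "(\<rho> \<longlongrightarrow> u) (at_right a)" and h_lim: "(h \<longlongrightarrow> h a) (at_right a)"
    using continuous_on_Icc_at_rightD[OF \<rho>c \<open>a < d\<close>] continuous_on_Icc_at_rightD[OF hc \<open>a < d\<close>]
      \<open>\<rho> a = u\<close> by auto
  have "\<forall>\<^sub>F x in at_right a. \<rho> x \<in> J"
    using topological_tendstoD[OF \<rho>_lim \<open>open J\<close> \<open>u \<in> J\<close>] .
  moreover have "\<forall>\<^sub>F x in at_right a. 0 < \<rho> x - h x"
    by (rule order_tendstoD(1)[OF tendsto_diff[OF \<rho>_lim h_lim]]) (use \<open>h a < u\<close> in simp)
  ultimately have "\<forall>\<^sub>F x in at_right a. \<rho> x \<in> J \<and> h x < \<rho> x"
    by eventually_elim auto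
  then obtain s where "a < s" "s < d" and \<rho>s: "\<forall>x\<in>{a..s}. \<rho> x \<in> J \<and> h x < \<rho> x"
    using eventually_at_right_initial_segment[of _ a d] \<open>\<rho> a = u\<close> \<open>u \<in> J\<close> \<open>h a < u\<close> \<open>a < d\<close>
    by blast
  obtain k where "continuous_on {a..s} k" "k a = u" "k s = h s" "\<forall>x\<in>{a..s}. (x, k x) \<in> H"
    using functionally_connectedD[OF fc \<open>(a, u) \<in> H\<close>, of s "h s"] hH \<open>a < s\<close> \<open>s < d\<close> by auto
  moreover have "continuous_graph_in H J {a..s} \<rho>"
    using \<rho>c \<rho>H \<rho>s \<open>s < d\<close> by (auto simp: continuous_graph_in_def intro: continuous_on_subset)
  moreover have "continuous_graph_in H J {a..s} h"
    by (rule continuous_graph_in_subset[OF h]) (use \<open>s < d\<close> in auto)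
  ultimately obtain g where g: "continuous_graph_in H J {a..s} g" "g a = u" "g s = h s"
    using continuous_graph_in_switch_down[of a s J H \<rho> h k] \<rho>s \<open>a < s\<close> \<open>\<rho> a = u\<close> \<open>is_interval J\<close>
    by auto
  have "continuous_graph_in H J {a..d} (\<lambda>x. if x \<le> s then g x else h x)"
    by (rule continuous_graph_in_glue[OF g(1) continuous_graph_in_subset[OF h]])
      (use g \<open>a < s\<close> \<open>s < d\<close> in auto)
  then show ?thesis
    using g \<open>a < s\<close> \<open>s < d\<close> by (intro exI) auto
qed

lemma continuous_graph_in_join_left:
  assumes fc: "functionally_connected H" and "a < d"
    and h: "continuous_graph_in H J {a..d} h"
    and "(a, u) \<in> H" "u \<in> J" "open J" "is_interval J"
  shows "\<exists>g. continuous_graph_in H J {a..d} g \<and> g a = u \<and> g d = h d"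
proof -
  consider "u = h a" | "h a < u" | "u < h a" by linarith
  then show ?thesis
  proof cases
    case 1
    then show ?thesis using h by blast
  next
    case 2
    then show ?thesis using continuous_graph_in_join_from_above assms by blast
  next
    case 3
    let ?H = "{(x, y). (x, - y) \<in> H}"
    have "continuous_graph_in ?H (uminus ` J) {a..d} (\<lambda>x. - h x)"
      using h by (simp add: continuous_graph_in_reflect_y)
    moreover have "(a, - u) \<in> ?H" "- u \<in> uminus ` J" "open (uminus ` J)" "is_interval (uminus ` J)"
      using assms by (auto simp: open_negations)
    ultimately obtain g where g: "continuous_graph_in ?H (uminus ` J) {a..d} g" "g a = - u" "g d = - h d"
      using continuous_graph_in_join_from_above[OF functionally_connected_reflect_y[OF fc] \<open>a < d\<close>]
        3 by fastforce
    then have "continuous_graph_in H J {a..d} (\<lambda>x. - g x)"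
      using continuous_graph_in_reflect_y[of H J _ "\<lambda>x. - g x"] by simp
    then show ?thesis using g by (intro exI[of _ "\<lambda>x. - g x"]) auto
  qed
qed

lemma continuous_graph_in_join_right:
  assumes fc: "functionally_connected H" and "d < b"
    and h: "continuous_graph_in H J {d..b} h"
    and "(b, v) \<in> H" "v \<in> J" "open J" "is_interval J"
  shows "\<exists>g. continuous_graph_in H J {d..b} g \<and> g d = h d \<and> g b = v"
proof -
  let ?H = "{(x, y). (- x, y) \<in> H}"
  have h_reflected: "continuous_graph_in ?H J {-b..-d} (\<lambda>x. h (- x))"
    using h continuous_graph_in_reflect_x[of H J "{d..b}" h] by simp
  obtain g where g: "continuous_graph_in ?H J {-b..-d} g" "g (- b) = v" "g (- d) = h d"
    using continuous_graph_in_join_left[OF functionally_connected_reflect_x[OF fc] _ h_reflected, of v]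
      assms by auto
  then have "continuous_graph_in H J {d..b} (\<lambda>x. g (- x))"
    using continuous_graph_in_reflect_x[of H J "{d..b}" "\<lambda>x. g (- x)"] by simp
  then show ?thesis using g by (intro exI[of _ "\<lambda>x. g (- x)"]) auto
qed

theorem lemma4p3:
  fixes a b u v :: real and H :: "(real \<times> real) set" and h :: "real \<Rightarrow> real"
  assumes "a < b"
    and "functionally_connected H"
    and "{a..b} \<subseteq> fst ` H"
    and "continuous_on {a..b} h"
    and "\<forall>x\<in>{a..b}. (x, h x) \<in> H"
    and "(a, u) \<in> H" and "(b, v) \<in> H"
  shows "\<forall>J :: real set. open J \<and> is_interval J \<and> u \<in> J \<and> v \<in> J \<and> h ` {a..b} \<subseteq> J \<longrightarrow>
           (\<exists>g. continuous_on {a..b} g \<and> g ` {a..b} \<subseteq> J \<and>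
                (\<forall>x\<in>{a..b}. (x, g x) \<in> H) \<and> g a = u \<and> g b = v)"
proof (intro allI impI)
  fix J :: "real set"
  assume J: "open J \<and> is_interval J \<and> u \<in> J \<and> v \<in> J \<and> h ` {a..b} \<subseteq> J"
  define m where "m = (a + b) / 2"
  have "a < m" "m < b" using \<open>a < b\<close> by (auto simp: m_def)
  have h: "continuous_graph_in H J {a..b} h"
    using assms(4,5) J by (simp add: continuous_graph_in_def)
  obtain g1 where g1: "continuous_graph_in H J {a..m} g1" "g1 a = u" "g1 m = h m"
    using continuous_graph_in_join_left[OF assms(2) \<open>a < m\<close> continuous_graph_in_subset[OF h]]
      assms(6) J \<open>m < b\<close> by auto
  obtain g2 where g2: "continuous_graph_in H J {m..b} g2" "g2 m = h m" "g2 b = v"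
    using continuous_graph_in_join_right[OF assms(2) \<open>m < b\<close> continuous_graph_in_subset[OF h]]
      assms(7) J \<open>a < m\<close> by auto
  define g where "g x = (if x \<le> m then g1 x else g2 x)" for x
  have "continuous_graph_in H J {a..b} g"
    unfolding g_def
    by (rule continuous_graph_in_glue[OF g1(1) g2(1)]) (use g1 g2 \<open>a < m\<close> \<open>m < b\<close> in auto)
  moreover have "g a = u" "g b = v" using g1 g2 \<open>a < m\<close> \<open>m < b\<close> by (auto simp: g_def)
  ultimately show "\<exists>g. continuous_on {a..b} g \<and> g ` {a..b} \<subseteq> J \<and>
                (\<forall>x\<in>{a..b}. (x, g x) \<in> H) \<and> g a = u \<and> g b = v"
    unfolding continuous_graph_in_def by blast
qed

end
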